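(* There is an absolute constant $c>0$ such that for every instance $I$ of continuous BGT, the schedule produced by Algorithm 1 satisfies $\mathrm{MH}\le c\cdot \frac{h_{\max}}{h_{\min}}\cdot\mathrm{OPT}(I)$. (Algorithm 1: compute a minimum spanning tree $T$ of $V$ with respect to the travel times, and let the robot, starting at $v_1$, repeatedly traverse a closed Euler tour of $T$, i.e. a closed walk starting and ending at $v_1$ that traverses every edge of $T$ exactly twice; bamboos are cut whenever the robot is at their point.)
   Context: Continuous BGT: bamboos at points $V=\{v_1,\dots,v_n\}$, $n\ge2$, growth rates $h_1\ge\dots\ge h_n>0$ with $h_1>h_n$, initial heights $0$; symmetric travel times $t_{i,j}>0$ ($i\ne j$) satisfying the triangle inequality. A robot starts at $v_1$ at time $0$, travels between points with time $t_{i,j}$ from $v_i$ to $v_j$, and cuts the bamboo at every point it is at, instantaneously, to height $0$. Height of $b_i$ at time $t$ is $h_i$ times time elapsed since its last cut (or since $0$). $\mathrm{MH}$ of a schedule is the supremum of all heights over all times; $\mathrm{OPT}(I)$ is the infimum of $\mathrm{MH}$ over all robot walks. $h_{\max}=h_1$, $h_{\min}=h_n$. *)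

theory Defs
  imports Complex_Main "HOL-Library.Extended_Real"
begin

text \<open>Points are v_1..v_n, represented by indices 0..n-1 (index 0 is v_1).
  Growth rates h i, travel times t i j.\<close>

definition bgt_instance :: "nat \<Rightarrow> (nat \<Rightarrow> real) \<Rightarrow> (nat \<Rightarrow> nat \<Rightarrow> real) \<Rightarrow> bool" where
  "bgt_instance n h t \<longleftrightarrow>
     n \<ge> 2 \<and>
     (\<forall>i j. i < j \<and> j < n \<longrightarrow> h j \<le> h i) \<and>
     h (n - 1) > 0 \<and> h 0 > h (n - 1) \<and>
     (\<forall>i j. i < n \<and> j < n \<and> i \<noteq> j \<longrightarrow> t i j > 0 \<and> t i j = t j i) \<and>
     (\<forall>i j k. i < n \<and> j < n \<and> k < n \<and> i \<noteq> j \<and> j \<noteq> k \<and> i \<noteq> k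
        \<longrightarrow> t i k \<le> t i j + t j k)"

text \<open>A robot walk: the k-th visited point is w k; the robot arrives there at time a k,
  stays (cutting) until time d k, then travels directly to w (k+1).\<close>

definition valid_walk :: "nat \<Rightarrow> (nat \<Rightarrow> nat \<Rightarrow> real) \<Rightarrow> (nat \<Rightarrow> nat) \<Rightarrow> (nat \<Rightarrow> real) \<Rightarrow> (nat \<Rightarrow> real) \<Rightarrow> bool" where
  "valid_walk n t w a d \<longleftrightarrow>
     w 0 = 0 \<and> a 0 = 0 \<and>
     (\<forall>k. w k < n) \<and> (\<forall>k. w (Suc k) \<noteq> w k) \<and>
     (\<forall>k. a k \<le> d k) \<and>
     (\<forall>k. a (Suc k) = d k + t (w k) (w (Suc k)))"

definition at_times :: "(nat \<Rightarrow> nat) \<Rightarrow> (nat \<Rightarrow> real) \<Rightarrow> (nat \<Rightarrow> real) \<Rightarrow> nat \<Rightarrow> real set" where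
  "at_times w a d i = (\<Union>k\<in>{k. w k = i}. {a k .. d k})"

definition height :: "(nat \<Rightarrow> real) \<Rightarrow> (nat \<Rightarrow> nat) \<Rightarrow> (nat \<Rightarrow> real) \<Rightarrow> (nat \<Rightarrow> real) \<Rightarrow> nat \<Rightarrow> real \<Rightarrow> real" where
  "height h w a d i s = h i * (s - Sup ({0} \<union> (at_times w a d i \<inter> {..s})))"

definition MH :: "nat \<Rightarrow> (nat \<Rightarrow> real) \<Rightarrow> (nat \<Rightarrow> nat) \<Rightarrow> (nat \<Rightarrow> real) \<Rightarrow> (nat \<Rightarrow> real) \<Rightarrow> ereal" where
  "MH n h w a d = (SUP s\<in>{0::real..}. SUP i\<in>{..<n}. ereal (height h w a d i s))"

definition OPT :: "nat \<Rightarrow> (nat \<Rightarrow> real) \<Rightarrow> (nat \<Rightarrow> nat \<Rightarrow> real) \<Rightarrow> ereal" where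
  "OPT n h t = (INF wad\<in>{(w, a, d). valid_walk n t w a d}.
                  (case wad of (w, a, d) \<Rightarrow> MH n h w a d))"

text \<open>Undirected edges of the complete graph on {0..<n} are represented as pairs (i,j), i<j.\<close>
definition tree_adj :: "(nat \<times> nat) set \<Rightarrow> nat \<Rightarrow> nat \<Rightarrow> bool" where
  "tree_adj E x y \<longleftrightarrow> (x, y) \<in> E \<or> (y, x) \<in> E"

definition spanning_tree :: "nat \<Rightarrow> (nat \<times> nat) set \<Rightarrow> bool" where
  "spanning_tree n E \<longleftrightarrow>
     E \<subseteq> {(i, j). i < j \<and> j < n} \<and>
     (\<forall>i<n. (0, i) \<in> {(x, y). tree_adj E x y}\<^sup>*) \<and>
     card E = n - 1"

definition tree_weight :: "(nat \<Rightarrow> nat \<Rightarrow> real) \<Rightarrow> (nat \<times> nat) set \<Rightarrow> real" where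
  "tree_weight t E = (\<Sum>(i, j)\<in>E. t i j)"

definition min_spanning_tree :: "nat \<Rightarrow> (nat \<Rightarrow> nat \<Rightarrow> real) \<Rightarrow> (nat \<times> nat) set \<Rightarrow> bool" where
  "min_spanning_tree n t E \<longleftrightarrow>
     spanning_tree n E \<and> (\<forall>E'. spanning_tree n E' \<longrightarrow> tree_weight t E \<le> tree_weight t E')"

definition euler_tour :: "(nat \<times> nat) set \<Rightarrow> nat list \<Rightarrow> bool" where
  "euler_tour E tour \<longleftrightarrow>
     tour \<noteq> [] \<and> hd tour = 0 \<and> last tour = 0 \<and>
     (\<forall>k. Suc k < length tour \<longrightarrow> tree_adj E (tour ! k) (tour ! Suc k)) \<and>
     (\<forall>(i, j)\<in>E. card {k. Suc k < length tour \<and> {tour ! k, tour ! Suc k} = {i, j}} = 2)"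

text \<open>Algorithm 1's schedule: repeat the tour forever, without waiting.\<close>
definition alg_walk :: "nat list \<Rightarrow> nat \<Rightarrow> nat" where
  "alg_walk tour k = tour ! (k mod (length tour - 1))"

fun alg_times :: "(nat \<Rightarrow> nat \<Rightarrow> real) \<Rightarrow> nat list \<Rightarrow> nat \<Rightarrow> real" where
  "alg_times t tour 0 = 0"
| "alg_times t tour (Suc k) = alg_times t tour k + t (alg_walk tour k) (alg_walk tour (Suc k))"

end

theory Submission
  imports Defs
begin

text \<open>
  Lower bound: if the robot has visited every point by time T, then the edges along which it
  first enters each point form a spanning tree whose weight is at most the travel time, hence
  at most T. So at every time T below the weight W of a minimum spanning tree some bamboo is
  still uncut and has height at least h_min T; therefore OPT \<ge> h_min W.

  Upper bound: one round of the Euler tour takes time 2W and passes every point, so every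
  bamboo is cut at least once in each time window of length 2W and never exceeds h_max 2W.
  So the constant c = 2 works.
\<close>

lemma bgt_instance_rates:
  assumes "bgt_instance n h t" and "i < n"
  shows "0 < h (n - 1)" and "h (n - 1) \<le> h i" and "h i \<le> h 0"
proof -
  have mono: "h k \<le> h j" if "j \<le> k" "k < n" for j k
    using assms(1) that unfolding bgt_instance_def by (cases "j = k") auto
  show "0 < h (n - 1)" using assms(1) by (simp add: bgt_instance_def)
  show "h (n - 1) \<le> h i" "h i \<le> h 0" using mono[of i "n - 1"] mono[of 0 i] assms(2) by auto
qed

lemma bgt_instance_travel:
  assumes "bgt_instance n h t" "i < n" "j < n" "i \<noteq> j"
  shows "0 < t i j" and "t i j = t j i"
  using assms unfolding bgt_instance_def by blast+

section \<open>Heights\<close>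

lemma height_unvisited:
  assumes "0 \<le> s" and "\<And>k. w k = i \<Longrightarrow> s < a k"
  shows "height h w a d i s = h i * s"
proof -
  have "at_times w a d i \<inter> {..s} = {}"
    unfolding at_times_def using assms(2) by fastforce
  then show ?thesis unfolding height_def by simp
qed

lemma height_le_of_recent_cut:
  assumes "0 \<le> h i" and "c \<in> {0} \<union> (at_times w a d i \<inter> {..s})" and "s - P \<le> c"
  shows "height h w a d i s \<le> h i * P"
proof -
  have "bdd_above ({0} \<union> (at_times w a d i \<inter> {..s}))"
    by (rule bdd_aboveI[of _ "max 0 s"]) auto
  with assms(2) have "c \<le> Sup ({0} \<union> (at_times w a d i \<inter> {..s}))"
    by (rule cSup_upper)
  then show ?thesis
    unfolding height_def using assms(1,3) by (intro mult_left_mono) auto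
qed

lemma MH_ge_height:
  assumes "0 \<le> s" and "i < n"
  shows "ereal (height h w a d i s) \<le> MH n h w a d"
  unfolding MH_def
  by (rule SUP_upper2[of s]) (use assms in \<open>auto intro: SUP_upper\<close>)

lemma MH_le:
  assumes "\<And>i s. i < n \<Longrightarrow> 0 \<le> s \<Longrightarrow> height h w a d i s \<le> B"
  shows "MH n h w a d \<le> ereal B"
  unfolding MH_def using assms by (auto intro!: SUP_least)

lemma MH_nonneg:
  assumes "0 < n"
  shows "0 \<le> MH n h w a d"
proof -
  have "Sup ({0} \<union> (at_times w a d 0 \<inter> {..0})) = (0::real)"
    by (rule cSup_eq_maximum) auto
  then have "height h w a d 0 0 = 0"
    unfolding height_def by simp
  then show ?thesis using MH_ge_height[of 0 0 n h w a d] assms by (simp add: zero_ereal_def)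
qed

lemma ereal_le_by_pos_reals_below:
  fixes z :: ereal
  assumes "0 \<le> z" and "\<And>r. 0 < r \<Longrightarrow> r < y \<Longrightarrow> ereal r \<le> z"
  shows "ereal y \<le> z"
proof (cases "y \<le> 0")
  case True
  then have "ereal y \<le> 0" by (simp add: zero_ereal_def)
  then show ?thesis using assms(1) by (rule order_trans)
next
  case False
  show ?thesis
  proof (rule dense_le_bounded[of 0])
    fix x assume "0 < x" "x < ereal y"
    then obtain r where "x = ereal r" "0 < r" "r < y" by (cases x) auto
    then show "x \<le> z" using assms(2) by simp
  qed (use False in auto)
qed

section \<open>First-visit trees\<close>

lemma tree_adj_min_max: "(min x y, max x y) \<in> E \<Longrightarrow> tree_adj E x y"
  unfolding tree_adj_def by (cases "x \<le> y") (auto simp: min_def max_def)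

lemma tree_adj_edge:
  assumes "E \<subseteq> {(i, j). i < j \<and> j < n}" and "tree_adj E x y"
  shows "x \<noteq> y" "x < n" "y < n" "(min x y, max x y) \<in> E"
  using assms unfolding tree_adj_def by (auto simp: min_def max_def)

lemma min_max_eq_iff_doubleton:
  fixes a b i j :: "'a::linorder"
  assumes "i < j"
  shows "(min a b, max a b) = (i, j) \<longleftrightarrow> {a, b} = {i, j}"
  using assms by (auto simp: min_def max_def doubleton_eq_iff)

lemma min_max_pair_eqD:
  fixes a b c d :: "'a::linorder"
  assumes "(min a b, max a b) = (min c d, max c d)"
  shows "b = d \<or> (a = d \<and> c = b)"
  using assms by (auto simp: min_def max_def split: if_splits)

definition first_visit :: "(nat \<Rightarrow> 'a) \<Rightarrow> 'a \<Rightarrow> nat" where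
  "first_visit w v = (LEAST k. w k = v)"

definition entry_vertex :: "(nat \<Rightarrow> 'a) \<Rightarrow> 'a \<Rightarrow> 'a" where
  "entry_vertex w v = w (first_visit w v - 1)"

definition entry_edge :: "(nat \<Rightarrow> nat) \<Rightarrow> nat \<Rightarrow> nat \<times> nat" where
  "entry_edge w v = (min (entry_vertex w v) v, max (entry_vertex w v) v)"

definition first_visit_tree :: "nat \<Rightarrow> (nat \<Rightarrow> nat) \<Rightarrow> (nat \<times> nat) set" where
  "first_visit_tree n w = entry_edge w ` {1..<n}"

lemma first_visit_eq: "w k = v \<Longrightarrow> w (first_visit w v) = v"
  unfolding first_visit_def by (rule LeastI)

lemma first_visit_le: "w k = v \<Longrightarrow> first_visit w v \<le> k"
  unfolding first_visit_def by (rule Least_le)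

locale covering_walk =
  fixes n :: nat and w :: "nat \<Rightarrow> nat"
  assumes start: "w 0 = 0"
    and moves: "w (Suc k) \<noteq> w k"
    and in_range: "w k < n"
    and covers: "v < n \<Longrightarrow> \<exists>k. w k = v"
begin

lemma first_visit_at: "v < n \<Longrightarrow> w (first_visit w v) = v"
  using covers[of v] by (auto intro: first_visit_eq)

lemma first_visit_pos: "v < n \<Longrightarrow> v \<noteq> 0 \<Longrightarrow> 0 < first_visit w v"
  using first_visit_at[of v] start by (cases "first_visit w v") auto

lemma entry_step: "v < n \<Longrightarrow> v \<noteq> 0 \<Longrightarrow> w (Suc (first_visit w v - 1)) = v"
  using first_visit_at first_visit_pos by simp

lemma entry_vertex_neq:
  assumes "v < n" "v \<noteq> 0"
  shows "entry_vertex w v \<noteq> v"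
proof -
  have "w (Suc (first_visit w v - 1)) \<noteq> w (first_visit w v - 1)" by (rule moves)
  then show ?thesis using entry_step[OF assms] by (simp add: entry_vertex_def)
qed

lemma first_visit_entry_vertex_less:
  assumes "v < n" "v \<noteq> 0"
  shows "first_visit w (entry_vertex w v) < first_visit w v"
proof -
  have "first_visit w (entry_vertex w v) \<le> first_visit w v - 1"
    by (rule first_visit_le) (simp add: entry_vertex_def)
  with first_visit_pos[OF assms] show ?thesis by linarith
qed

lemma inj_on_entry_edge: "inj_on (entry_edge w) {1..<n}"
proof (rule inj_onI)
  fix u v assume u: "u \<in> {1..<n}" and v: "v \<in> {1..<n}" and eq: "entry_edge w u = entry_edge w v"
  have "u = v \<or> (entry_vertex w u = v \<and> entry_vertex w v = u)"
    using eq unfolding entry_edge_def by (rule min_max_pair_eqD)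
  moreover have "\<not> (entry_vertex w u = v \<and> entry_vertex w v = u)"
    using first_visit_entry_vertex_less[of u] first_visit_entry_vertex_less[of v] u v by auto
  ultimately show "u = v" by blast
qed

lemma first_visit_tree_connected:
  "v < n \<Longrightarrow> (0, v) \<in> {(x, y). tree_adj (first_visit_tree n w) x y}\<^sup>*"
proof (induction v rule: measure_induct_rule[where f = "first_visit w"])
  case (less v)
  show ?case
  proof (cases "v = 0")
    case False
    have "(0, entry_vertex w v) \<in> {(x, y). tree_adj (first_visit_tree n w) x y}\<^sup>*"
      using less first_visit_entry_vertex_less[OF less.prems False] in_range
      unfolding entry_vertex_def by blast
    moreover have "entry_edge w v \<in> first_visit_tree n w"
      using less.prems False by (simp add: first_visit_tree_def)
    then have "tree_adj (first_visit_tree n w) (entry_vertex w v) v"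
      unfolding entry_edge_def by (rule tree_adj_min_max)
    ultimately show ?thesis by (simp add: rtrancl_into_rtrancl)
  qed simp
qed

lemma first_visit_tree_edges: "first_visit_tree n w \<subseteq> {(i, j). i < j \<and> j < n}"
  unfolding first_visit_tree_def
proof (rule image_subsetI)
  fix v assume "v \<in> {1..<n}"
  then have "entry_vertex w v \<noteq> v" "entry_vertex w v < n" "v < n"
    using entry_vertex_neq in_range unfolding entry_vertex_def by auto
  then show "entry_edge w v \<in> {(i, j). i < j \<and> j < n}"
    by (auto simp: entry_edge_def min_def max_def)
qed

lemma spanning_tree_first_visit_tree: "spanning_tree n (first_visit_tree n w)"
proof -
  have "card (first_visit_tree n w) = n - 1"
    unfolding first_visit_tree_def card_image[OF inj_on_entry_edge] by simp
  then show ?thesis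
    unfolding spanning_tree_def using first_visit_tree_edges first_visit_tree_connected by blast
qed

lemma tree_weight_first_visit_tree_le:
  assumes sym: "\<And>i j. i < n \<Longrightarrow> j < n \<Longrightarrow> i \<noteq> j \<Longrightarrow> t i j = t j i"
    and nonneg: "\<And>i j. i < n \<Longrightarrow> j < n \<Longrightarrow> i \<noteq> j \<Longrightarrow> 0 \<le> t i j"
    and visited: "\<And>v. v < n \<Longrightarrow> \<exists>k\<le>K. w k = v"
  shows "tree_weight t (first_visit_tree n w) \<le> (\<Sum>q<K. t (w q) (w (Suc q)))"
proof -
  define entry_time where "entry_time v = first_visit w v - 1" for v
  have entry_time: "w (entry_time v) = entry_vertex w v" "w (Suc (entry_time v)) = v"
    "entry_time v < K" if "v \<in> {1..<n}" for v
  proof -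
    have v: "v < n" "v \<noteq> 0" using that by auto
    obtain k where "k \<le> K" "w k = v" using visited[OF v(1)] by blast
    then have "first_visit w v \<le> K" using first_visit_le[of w k v] by linarith
    then show "entry_time v < K" using first_visit_pos[OF v] unfolding entry_time_def by linarith
    show "w (entry_time v) = entry_vertex w v" unfolding entry_time_def entry_vertex_def ..
    show "w (Suc (entry_time v)) = v" unfolding entry_time_def by (rule entry_step[OF v])
  qed
  have inj: "inj_on entry_time {1..<n}"
    by (rule inj_on_inverseI[where g = "\<lambda>q. w (Suc q)"]) (rule entry_time(2))
  have "tree_weight t (first_visit_tree n w) = (\<Sum>v\<in>{1..<n}. t (entry_vertex w v) v)"
    unfolding tree_weight_def first_visit_tree_def sum.reindex[OF inj_on_entry_edge]
  proof (rule sum.cong)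
    fix v assume v: "v \<in> {1..<n}"
    then have "entry_vertex w v \<noteq> v" "entry_vertex w v < n" "v < n"
      using entry_vertex_neq[of v] in_range[of "first_visit w v - 1"]
      by (auto simp: entry_vertex_def)
    then show "((\<lambda>(i, j). t i j) \<circ> entry_edge w) v = t (entry_vertex w v) v"
      using sym[of "entry_vertex w v" v] by (simp add: entry_edge_def min_def max_def)
  qed simp
  also have "\<dots> = (\<Sum>q\<in>entry_time ` {1..<n}. t (w q) (w (Suc q)))"
    unfolding sum.reindex[OF inj] by (rule sum.cong) (simp_all add: entry_time)
  also have "\<dots> \<le> (\<Sum>q<K. t (w q) (w (Suc q)))"
    by (rule sum_mono2) (auto simp: entry_time intro!: nonneg in_range moves[THEN not_sym])
  finally show ?thesis .
qed

end

section \<open>Lower bound\<close>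

lemma valid_walk_travel_le_arrival:
  assumes "valid_walk n t w a d"
  shows "(\<Sum>q<K. t (w q) (w (Suc q))) \<le> a K"
proof (induction K)
  case 0
  show ?case using assms by (simp add: valid_walk_def)
next
  case (Suc K)
  have "a K \<le> d K" "a (Suc K) = d K + t (w K) (w (Suc K))"
    using assms by (auto simp: valid_walk_def)
  with Suc show ?case by simp
qed

lemma mst_weight_le_cover_time:
  assumes bgt: "bgt_instance n h t" and mst: "min_spanning_tree n t E"
    and walk: "valid_walk n t w a d" and cover: "\<And>i. i < n \<Longrightarrow> \<exists>k. w k = i \<and> a k \<le> T"
  shows "tree_weight t E \<le> T"
proof -
  obtain visit where visit: "\<And>i. i < n \<Longrightarrow> w (visit i) = i \<and> a (visit i) \<le> T"
    using cover by metis
  define K where "K = Max (visit ` {..<n})"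
  have "0 < n" using bgt by (simp add: bgt_instance_def)
  then have "K \<in> visit ` {..<n}" unfolding K_def by (intro Max_in) auto
  then have aK: "a K \<le> T" using visit by blast
  have visited: "\<exists>k\<le>K. w k = i" if "i < n" for i
    using visit[OF that] that unfolding K_def by (intro exI[of _ "visit i"]) auto
  interpret covering_walk n w
    using walk cover by unfold_locales (auto simp: valid_walk_def)
  have "tree_weight t E \<le> tree_weight t (first_visit_tree n w)"
    using mst spanning_tree_first_visit_tree by (simp add: min_spanning_tree_def)
  also have "\<dots> \<le> (\<Sum>q<K. t (w q) (w (Suc q)))"
    using bgt_instance_travel[OF bgt] visited
    by (intro tree_weight_first_visit_tree_le) (auto intro: less_imp_le)
  also have "\<dots> \<le> a K" using walk by (rule valid_walk_travel_le_arrival)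
  finally show ?thesis using aK by linarith
qed

lemma MH_ge_mst_weight:
  assumes bgt: "bgt_instance n h t" and mst: "min_spanning_tree n t E"
    and walk: "valid_walk n t w a d"
  shows "ereal (h (n - 1) * tree_weight t E) \<le> MH n h w a d"
proof (rule ereal_le_by_pos_reals_below)
  have n: "0 < n" using bgt by (simp add: bgt_instance_def)
  then show "0 \<le> MH n h w a d" by (rule MH_nonneg)
  have hmin: "0 < h (n - 1)" by (rule bgt_instance_rates(1)[OF bgt n])
  fix r assume r: "0 < r" "r < h (n - 1) * tree_weight t E"
  define T where "T = r / h (n - 1)"
  have T: "0 \<le> T" "T < tree_weight t E" "r = h (n - 1) * T"
    using r hmin by (simp_all add: T_def field_simps)
  obtain i where i: "i < n" "\<And>k. w k = i \<Longrightarrow> T < a k"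
    using mst_weight_le_cover_time[OF bgt mst walk, of T] T(2) by (meson not_le)
  have "r \<le> h i * T"
    using T bgt_instance_rates(2)[OF bgt i(1)] by (simp add: mult_right_mono)
  also have "\<dots> = height h w a d i T" using height_unvisited[OF T(1) i(2)] by simp
  finally show "ereal r \<le> MH n h w a d"
    using MH_ge_height[OF T(1) i(1)] by (meson ereal_less_eq(3) order_trans)
qed

lemma OPT_ge_mst_weight:
  assumes "bgt_instance n h t" and "min_spanning_tree n t E"
  shows "ereal (h (n - 1) * tree_weight t E) \<le> OPT n h t"
  unfolding OPT_def using MH_ge_mst_weight[OF assms] by (auto intro!: INF_greatest)

section \<open>Upper bound for Algorithm 1\<close>

lemma euler_tour_endpoints:
  assumes "euler_tour E tour"
  shows "tour ! 0 = 0" and "tour ! (length tour - 1) = 0"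
proof -
  have "tour \<noteq> []" "hd tour = 0" "last tour = 0" using assms by (simp_all add: euler_tour_def)
  then show "tour ! 0 = 0" "tour ! (length tour - 1) = 0" by (simp_all add: hd_conv_nth last_conv_nth)
qed

lemma euler_tour_traverses:
  assumes "euler_tour E tour" and "(i, j) \<in> E"
  obtains k where "Suc k < length tour" and "{tour ! k, tour ! Suc k} = {i, j}"
proof -
  have "card {k. Suc k < length tour \<and> {tour ! k, tour ! Suc k} = {i, j}} = 2"
    using assms unfolding euler_tour_def by blast
  then have "{k. Suc k < length tour \<and> {tour ! k, tour ! Suc k} = {i, j}} \<noteq> {}" by force
  then show ?thesis using that by blast
qed

lemma euler_tour_length_ge_2:
  assumes "euler_tour E tour" and "E \<noteq> {}"
  shows "2 \<le> length tour"
proof -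
  obtain i j where "(i, j) \<in> E" using assms(2) by auto
  with assms(1) obtain k where "Suc k < length tour" by (rule euler_tour_traverses)
  then show ?thesis by simp
qed

lemma euler_tour_reaches:
  assumes "E \<subseteq> {(i, j). i < j \<and> j < n}" and "euler_tour E tour"
    and "(0, x) \<in> {(x, y). tree_adj E x y}\<^sup>*"
  shows "x \<in> set tour"
  using assms(3)
proof (induction rule: rtrancl_induct)
  case base
  have "tour \<noteq> []" "hd tour = 0" using assms(2) by (simp_all add: euler_tour_def)
  then show ?case using hd_in_set by metis
next
  case (step y z)
  then have "(min y z, max y z) \<in> E" using tree_adj_edge[OF assms(1)] by simp
  with assms(2) obtain k
    where k: "Suc k < length tour" "{tour ! k, tour ! Suc k} = {min y z, max y z}"
    by (rule euler_tour_traverses)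
  then have "z \<in> {tour ! k, tour ! Suc k}" by (auto simp: min_def max_def)
  then show ?case using k(1) by auto
qed

lemma alg_walk_nth:
  assumes "euler_tour E tour" and "j < length tour"
  shows "alg_walk tour j = tour ! j"
proof (cases "j = length tour - 1")
  case True
  then show ?thesis using euler_tour_endpoints[OF assms(1)] by (simp add: alg_walk_def)
qed (use assms(2) in \<open>simp add: alg_walk_def\<close>)

lemma alg_walk_add_period: "alg_walk tour (k + m * (length tour - 1)) = alg_walk tour k"
  by (simp add: alg_walk_def)

lemma alg_walk_step:
  assumes "euler_tour E tour" and "2 \<le> length tour"
  obtains q where "Suc q < length tour"
    and "alg_walk tour k = tour ! q" and "alg_walk tour (Suc k) = tour ! Suc q"
proof
  let ?q = "k mod (length tour - 1)"
  have "?q < length tour - 1" using assms(2) by simp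
  then show "Suc ?q < length tour" by linarith
  show "alg_walk tour k = tour ! ?q" by (simp add: alg_walk_def)
  have "alg_walk tour (Suc k) = alg_walk tour (Suc ?q)" by (simp add: alg_walk_def mod_Suc_eq)
  also have "\<dots> = tour ! Suc ?q" using assms(1) \<open>Suc ?q < length tour\<close> by (rule alg_walk_nth)
  finally show "alg_walk tour (Suc k) = tour ! Suc ?q" .
qed

lemma alg_times_eq_sum: "alg_times t tour m = (\<Sum>q<m. t (alg_walk tour q) (alg_walk tour (Suc q)))"
  by (induction m) simp_all

lemma alg_times_shift_period:
  "alg_times t tour (k + (length tour - 1)) = alg_times t tour k + alg_times t tour (length tour - 1)"
proof (induction k)
  case (Suc k)
  have "alg_walk tour (j + (length tour - 1)) = alg_walk tour j" for j
    using alg_walk_add_period[of tour j 1] by simp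
  from this[of k] this[of "Suc k"] show ?case using Suc by simp
qed simp

lemma alg_times_add_period:
  "alg_times t tour (k + m * (length tour - 1))
     = alg_times t tour k + real m * alg_times t tour (length tour - 1)"
proof (induction m)
  case (Suc m)
  have "k + Suc m * (length tour - 1) = (k + m * (length tour - 1)) + (length tour - 1)" by simp
  then show ?case using Suc alg_times_shift_period[of t tour "k + m * (length tour - 1)"]
    by (simp add: algebra_simps)
qed simp

lemma euler_tour_travel_time:
  assumes edges: "E \<subseteq> {(i, j). i < j \<and> j < n}" and tour: "euler_tour E tour"
    and sym: "\<And>i j. (i, j) \<in> E \<Longrightarrow> t i j = t j i"
  shows "(\<Sum>q<length tour - 1. t (tour ! q) (tour ! Suc q)) = 2 * tree_weight t E"
proof -
  let ?L = "length tour - 1" and ?t = "\<lambda>(i, j). t i j"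
  define e where "e q = (min (tour ! q) (tour ! Suc q), max (tour ! q) (tour ! Suc q))" for q
  have adj: "tree_adj E (tour ! q) (tour ! Suc q)" if "q < ?L" for q
    using tour that by (simp add: euler_tour_def)
  have e_in: "e q \<in> E" if "q < ?L" for q
    unfolding e_def using tree_adj_edge(4)[OF edges adj[OF that]] .
  have step: "t (tour ! q) (tour ! Suc q) = ?t (e q)" if "q < ?L" for q
    using e_in[OF that] sym unfolding e_def
    by (cases "tour ! q \<le> tour ! Suc q") (auto simp: min_def max_def)
  have fibre: "{q \<in> {..<?L}. e q = (i, j)}
      = {k. Suc k < length tour \<and> {tour ! k, tour ! Suc k} = {i, j}}" if "(i, j) \<in> E" for i j
  proof -
    have "i < j" using edges that by auto
    then show ?thesis unfolding e_def min_max_eq_iff_doubleton[OF \<open>i < j\<close>] by auto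
  qed
  have "finite E"
    by (rule finite_subset[OF edges], rule finite_subset[of _ "{..<n} \<times> {..<n}"]) auto
  have "(\<Sum>q<?L. t (tour ! q) (tour ! Suc q)) = (\<Sum>q<?L. ?t (e q))"
    by (rule sum.cong) (simp_all add: step)
  also have "\<dots> = (\<Sum>x\<in>E. \<Sum>q\<in>{q \<in> {..<?L}. e q = x}. ?t (e q))"
    by (rule sum.group[symmetric]) (use \<open>finite E\<close> e_in in auto)
  also have "\<dots> = (\<Sum>x\<in>E. 2 * ?t x)"
  proof (rule sum.cong)
    fix x assume "x \<in> E"
    then obtain i j where x: "x = (i, j)" "(i, j) \<in> E" by (cases x) auto
    have "card {q \<in> {..<?L}. e q = x} = 2"
      using tour x(2) unfolding x(1) fibre[OF x(2)] euler_tour_def by blast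
    then show "(\<Sum>q\<in>{q \<in> {..<?L}. e q = x}. ?t (e q)) = 2 * ?t x" by simp
  qed simp
  also have "\<dots> = 2 * tree_weight t E" by (simp add: tree_weight_def sum_distrib_left)
  finally show ?thesis .
qed

lemma alg_walk_visits:
  assumes tree: "spanning_tree n E" and tour: "euler_tour E tour"
    and len: "2 \<le> length tour" and "i < n"
  obtains j where "j < length tour - 1" and "alg_walk tour j = i"
proof -
  have "i \<in> set tour"
    using tree tour \<open>i < n\<close> unfolding spanning_tree_def by (auto intro: euler_tour_reaches)
  then obtain j where j: "j < length tour" "tour ! j = i" by (auto simp: in_set_conv_nth)
  show ?thesis
  proof (cases "j = length tour - 1")
    case True
    have "alg_walk tour 0 = tour ! 0" using len by (intro alg_walk_nth[OF tour]) linarith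
    then have "alg_walk tour 0 = i" using True j euler_tour_endpoints[OF tour] by simp
    with len show ?thesis by (intro that[of 0]) auto
  next
    case False
    then show ?thesis using j alg_walk_nth[OF tour j(1)] by (intro that[of j]) auto
  qed
qed

lemma alg_walk_travel_pos:
  assumes bgt: "bgt_instance n h t" and edges: "E \<subseteq> {(i, j). i < j \<and> j < n}"
    and tour: "euler_tour E tour" and len: "2 \<le> length tour"
  shows "0 < t (alg_walk tour k) (alg_walk tour (Suc k))"
proof -
  obtain q where q: "Suc q < length tour"
    "alg_walk tour k = tour ! q" "alg_walk tour (Suc k) = tour ! Suc q"
    using tour len by (rule alg_walk_step)
  have "tree_adj E (tour ! q) (tour ! Suc q)" using tour q(1) by (simp add: euler_tour_def)
  then show ?thesis
    unfolding q using tree_adj_edge[OF edges] bgt_instance_travel(1)[OF bgt] by blast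
qed

lemma nat_multiple_in_window:
  fixes P x s :: real
  assumes "0 < P" and "x \<le> s"
  obtains m :: nat where "x + m * P \<le> s" and "s - P < x + m * P"
proof
  define y where "y = (s - x) / P"
  have "0 \<le> y" using assms by (simp add: y_def)
  then have m: "real (nat \<lfloor>y\<rfloor>) \<le> y" "y < real (nat \<lfloor>y\<rfloor>) + 1" by linarith+
  have Py: "y * P = s - x" using assms(1) by (simp add: y_def)
  show "x + real (nat \<lfloor>y\<rfloor>) * P \<le> s"
    using mult_right_mono[OF m(1) less_imp_le[OF assms(1)]] Py by linarith
  have "y * P < real (nat \<lfloor>y\<rfloor>) * P + P"
    using mult_strict_right_mono[OF m(2) assms(1)] by (simp add: distrib_right)
  then show "s - P < x + real (nat \<lfloor>y\<rfloor>) * P" using Py by linarith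
qed

lemma alg_times_period:
  assumes bgt: "bgt_instance n h t" and edges: "E \<subseteq> {(i, j). i < j \<and> j < n}"
    and tour: "euler_tour E tour"
  shows "alg_times t tour (length tour - 1) = 2 * tree_weight t E"
proof -
  have "alg_times t tour (length tour - 1) = (\<Sum>q<length tour - 1. t (tour ! q) (tour ! Suc q))"
    unfolding alg_times_eq_sum by (rule sum.cong) (simp_all add: alg_walk_nth[OF tour])
  also have "\<dots> = 2 * tree_weight t E"
  proof (rule euler_tour_travel_time[OF edges tour])
    fix i j assume "(i, j) \<in> E"
    then have "i < n" "j < n" "i \<noteq> j" using edges by auto
    then show "t i j = t j i" by (rule bgt_instance_travel(2)[OF bgt])
  qed
  finally show ?thesis .
qed

lemma alg_times_mono:
  assumes "bgt_instance n h t" and "E \<subseteq> {(i, j). i < j \<and> j < n}"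
    and "euler_tour E tour" and "2 \<le> length tour" and "k \<le> m"
  shows "alg_times t tour k \<le> alg_times t tour m"
proof -
  have "alg_times t tour k \<le> alg_times t tour (Suc k)" for k
    using alg_walk_travel_pos[OF assms(1-4), of k] by simp
  then show ?thesis using assms(5) by (rule lift_Suc_mono_le)
qed

lemma alg_walk_recent_visit:
  assumes bgt: "bgt_instance n h t" and tree: "spanning_tree n E" and tour: "euler_tour E tour"
    and len: "2 \<le> length tour" and i: "i < n" and s: "0 \<le> s"
  defines "A \<equiv> alg_times t tour" and "P \<equiv> alg_times t tour (length tour - 1)"
  shows "\<exists>c\<in>{0} \<union> (at_times (alg_walk tour) A A i \<inter> {..s}). s - P \<le> c"
proof (cases "s \<le> P")
  case False
  let ?L = "length tour - 1"
  have edges: "E \<subseteq> {(i, j). i < j \<and> j < n}" using tree by (simp add: spanning_tree_def)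
  note mono = alg_times_mono[OF bgt edges tour len]
  have "0 < A 1" using alg_walk_travel_pos[OF bgt edges tour len, of 0] by (simp add: A_def)
  moreover have "A 1 \<le> P" unfolding A_def P_def using len by (intro mono) simp
  ultimately have P_pos: "0 < P" by linarith
  obtain j where j: "j < ?L" "alg_walk tour j = i"
    using tree tour len i by (rule alg_walk_visits)
  have "A j \<le> P" unfolding A_def P_def using j by (intro mono) simp
  with False have "A j \<le> s" by linarith
  with P_pos obtain m :: nat where m: "A j + m * P \<le> s" "s - P < A j + m * P"
    by (rule nat_multiple_in_window)
  have "A (j + m * ?L) = A j + m * P" unfolding A_def P_def by (rule alg_times_add_period)
  moreover have "A (j + m * ?L) \<in> at_times (alg_walk tour) A A i"
    unfolding at_times_def using alg_walk_add_period[of tour j m] j(2)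
    by (intro UN_I[of "j + m * ?L"]) auto
  ultimately show ?thesis using m by (intro bexI[of _ "A (j + m * ?L)"]) auto
qed (use s in auto)

lemma MH_alg_walk_le:
  assumes bgt: "bgt_instance n h t" and tree: "spanning_tree n E" and tour: "euler_tour E tour"
  shows "MH n h (alg_walk tour) (alg_times t tour) (alg_times t tour)
           \<le> ereal (h 0 * (2 * tree_weight t E))"
proof (rule MH_le)
  fix i and s :: real assume i: "i < n" and s: "0 \<le> s"
  let ?A = "alg_times t tour" and ?P = "alg_times t tour (length tour - 1)"
  have edges: "E \<subseteq> {(i, j). i < j \<and> j < n}" using tree by (simp add: spanning_tree_def)
  have "card E = n - 1" "2 \<le> n"
    using tree bgt by (simp_all add: spanning_tree_def bgt_instance_def)
  then have "E \<noteq> {}" by auto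
  with tour have len: "2 \<le> length tour" by (rule euler_tour_length_ge_2)
  have "0 \<le> ?P" using alg_times_mono[OF bgt edges tour len, of 0] by simp
  obtain c where "c \<in> {0} \<union> (at_times (alg_walk tour) ?A ?A i \<inter> {..s})" "s - ?P \<le> c"
    using alg_walk_recent_visit[OF bgt tree tour len i s] by blast
  moreover have "0 \<le> h i" "h i \<le> h 0"
    using bgt_instance_rates[OF bgt i] by linarith+
  ultimately have "height h (alg_walk tour) ?A ?A i s \<le> h i * ?P"
    by (intro height_le_of_recent_cut) auto
  also have "\<dots> \<le> h 0 * ?P" using \<open>h i \<le> h 0\<close> \<open>0 \<le> ?P\<close> by (rule mult_right_mono)
  also have "\<dots> = h 0 * (2 * tree_weight t E)" by (simp only: alg_times_period[OF bgt edges tour])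
  finally show "height h (alg_walk tour) ?A ?A i s \<le> h 0 * (2 * tree_weight t E)" .
qed

theorem theorem4:
  "\<exists>c::real. c > 0 \<and>
     (\<forall>n h t E tour. bgt_instance n h t \<longrightarrow> min_spanning_tree n t E \<longrightarrow> euler_tour E tour \<longrightarrow>
        MH n h (alg_walk tour) (alg_times t tour) (alg_times t tour)
          \<le> ereal (c * h 0 / h (n - 1)) * OPT n h t)"
proof (intro exI[of _ 2] conjI allI impI)
  fix n h t E tour
  assume bgt: "bgt_instance n h t" and mst: "min_spanning_tree n t E" and tour: "euler_tour E tour"
  have "0 < n" using bgt by (simp add: bgt_instance_def)
  then have hmin: "0 < h (n - 1)" and "h (n - 1) \<le> h 0"
    using bgt_instance_rates[OF bgt, of 0] by simp_all
  have "MH n h (alg_walk tour) (alg_times t tour) (alg_times t tour)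
      \<le> ereal (h 0 * (2 * tree_weight t E))"
    using bgt _ tour by (rule MH_alg_walk_le) (use mst in \<open>simp add: min_spanning_tree_def\<close>)
  also have "\<dots> = ereal (2 * h 0 / h (n - 1)) * ereal (h (n - 1) * tree_weight t E)"
    using hmin by (simp add: field_simps)
  also have "\<dots> \<le> ereal (2 * h 0 / h (n - 1)) * OPT n h t"
    using OPT_ge_mst_weight[OF bgt mst] hmin \<open>h (n - 1) \<le> h 0\<close>
    by (intro ereal_mult_left_mono) simp_all
  finally show "MH n h (alg_walk tour) (alg_times t tour) (alg_times t tour)
      \<le> ereal (2 * h 0 / h (n - 1)) * OPT n h t" .
qed simp

end
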